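(* Let $p,q\in[1,\infty]$, let $v=\{v_i\}_{i\in\mathbb Z}$ and $w=\{w_i\}_{i\in\mathbb Z}$ be positive sequences, let $\varphi$ be a non-degenerate quasi-concave function on $(0,\infty)$ and let $\{t_k\}_{k\in\mathbb Z}$ be a discretizing sequence for $\varphi$. Then $$\left(l_q(v),l_q(w)\right)_{\varphi,p}=l_p\Big(l_q^{M_k}\Big(\frac{v_i}{\varphi(v_i/w_i)}\Big)\Big),$$ where $M_k=\{i\in\mathbb Z:\ t_{k-1}<v_i/w_i\le t_k\}$.
   Context: A function $\varphi:(0,\infty)\to(0,\infty)$ is non-degenerate quasi-concave if $\varphi$ is non-decreasing, $\varphi(t)/t$ is non-increasing, and $\lim_{t\to0+}\varphi(t)=\lim_{t\to\infty}\varphi(t)/t=\lim_{t\to0+}t/\varphi(t)=\lim_{t\to\infty}1/\varphi(t)=0$. A positive sequence $\{a_k\}_{k\in\mathbb Z}$ is strongly increasing if $\inf_k a_{k+1}/a_k\ge2$, strongly decreasing if $\sup_k a_{k+1}/a_k\le1/2$. A strongly increasing $\{t_k\}_{k\in\mathbb Z}$ is a discretizing sequence for $\varphi$ if $\{\varphi(t_k)\}$ is strongly increasing, $\{\varphi(t_k)/t_k\}$ is strongly decreasing, and there is a partition $\mathbb Z=\mathbb Z_1\sqcup\mathbb Z_2$ with $\varphi(t_{k+1})\le2\varphi(t_k)$ for $k\in\mathbb Z_1$ and $\varphi(t_k)/t_k\le2\varphi(t_{k+1})/t_{k+1}$ for $k\in\mathbb Z_2$. For a Banach couple $\overline X=(X_0,X_1)$,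 $K(t,x;\overline X)=\inf_{x=x_0+x_1}(\|x_0\|_{X_0}+t\|x_1\|_{X_1})$, and $\overline X_{\varphi,p}=(X_0,X_1)_{\varphi,p}$ is the space of $x\in X_0+X_1$ with $\big(\sum_{k\in\mathbb Z}(K(t_k,x;\overline X)/\varphi(t_k))^p\big)^{1/p}<\infty$ (sup if $p=\infty$). For a sequence space $E$ and positive weight $u$, $E(u)$ is the space of sequences $a$ with $\{a_iu_i\}\in E$, normed by $\|\{a_iu_i\}\|_E$; thus $l_q(v)$ consists of $\{a_i\}$ with $\{a_iv_i\}\in l_q$. For sets $M_k\subset\mathbb Z$, $l_p(l_q^{M_k})$ is the space of $\{a_i\}$ with norm $\big(\sum_{k}(\sum_{i\in M_k}|a_i|^q)^{p/q}\big)^{1/p}$ (usual modification if $p$ or $q$ is $\infty$). Equality of spaces means equal sets with equivalent norms. *)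

theory Defs
  imports "HOL-Analysis.Analysis" "HOL-Library.Function_Algebras"
begin

definition nondeg_quasi_concave :: "(real \<Rightarrow> real) \<Rightarrow> bool" where
  "nondeg_quasi_concave \<phi> \<longleftrightarrow>
     (\<forall>t>0. \<phi> t > 0) \<and>
     (\<forall>s t. 0 < s \<longrightarrow> s \<le> t \<longrightarrow> \<phi> s \<le> \<phi> t) \<and>
     (\<forall>s t. 0 < s \<longrightarrow> s \<le> t \<longrightarrow> \<phi> t / t \<le> \<phi> s / s) \<and>
     (\<phi> \<longlongrightarrow> 0) (at_right 0) \<and>
     ((\<lambda>t. \<phi> t / t) \<longlongrightarrow> 0) at_top \<and>
     ((\<lambda>t. t / \<phi> t) \<longlongrightarrow> 0) (at_right 0) \<and>
     ((\<lambda>t. 1 / \<phi> t) \<longlongrightarrow> 0) at_top"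

text \<open>A positive sequence is strongly increasing if \<open>inf_k a_{k+1}/a_k \<ge> 2\<close>,
  strongly decreasing if \<open>sup_k a_{k+1}/a_k \<le> 1/2\<close>; stated pointwise (inf/sup bounds are equivalent to pointwise bounds, and this avoids Sup of possibly unbounded real sets).\<close>

definition strongly_increasing :: "(int \<Rightarrow> real) \<Rightarrow> bool" where
  "strongly_increasing a \<longleftrightarrow> (\<forall>k. a k > 0) \<and> (\<forall>k. a (k + 1) / a k \<ge> 2)"

definition strongly_decreasing :: "(int \<Rightarrow> real) \<Rightarrow> bool" where
  "strongly_decreasing a \<longleftrightarrow> (\<forall>k. a k > 0) \<and> (\<forall>k. a (k + 1) / a k \<le> 1 / 2)"

definition discretizing_sequence :: "(real \<Rightarrow> real) \<Rightarrow> (int \<Rightarrow> real) \<Rightarrow> bool" where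
  "discretizing_sequence \<phi> t \<longleftrightarrow>
     strongly_increasing t \<and>
     strongly_increasing (\<lambda>k. \<phi> (t k)) \<and>
     strongly_decreasing (\<lambda>k. \<phi> (t k) / t k) \<and>
     (\<exists>Z1 Z2. Z1 \<inter> Z2 = {} \<and> Z1 \<union> Z2 = UNIV \<and>
        (\<forall>k\<in>Z1. \<phi> (t (k + 1)) \<le> 2 * \<phi> (t k)) \<and>
        (\<forall>k\<in>Z2. \<phi> (t k) / t k \<le> 2 * (\<phi> (t (k + 1)) / t (k + 1))))"

definition enn_powr :: "ennreal \<Rightarrow> real \<Rightarrow> ennreal" where
  "enn_powr a r = (if a = \<infinity> then \<infinity> else ennreal (enn2real a powr r))"

definition lnorm :: "ennreal \<Rightarrow> ('i \<Rightarrow> ennreal) \<Rightarrow> ennreal" where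
  "lnorm p a = (if p = \<infinity> then (SUP i. a i)
                else enn_powr (\<Sum>\<^sub>\<infinity>i. enn_powr (a i) (enn2real p)) (1 / enn2real p))"

definition lq_weighted_norm :: "ennreal \<Rightarrow> (int \<Rightarrow> real) \<Rightarrow> (int \<Rightarrow> real) \<Rightarrow> ennreal" where
  "lq_weighted_norm q u a = lnorm q (\<lambda>i. ennreal \<bar>a i * u i\<bar>)"

definition lp_lq_blocks_weighted_norm ::
  "ennreal \<Rightarrow> ennreal \<Rightarrow> (int \<Rightarrow> int set) \<Rightarrow> (int \<Rightarrow> real) \<Rightarrow> (int \<Rightarrow> real) \<Rightarrow> ennreal" where
  "lp_lq_blocks_weighted_norm p q M u a =
     lnorm p (\<lambda>k. lnorm q (\<lambda>i. if i \<in> M k then ennreal \<bar>a i * u i\<bar> else 0))"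

definition Kfun :: "('a::plus \<Rightarrow> ennreal) \<Rightarrow> ('a \<Rightarrow> ennreal) \<Rightarrow> real \<Rightarrow> 'a \<Rightarrow> ennreal" where
  "Kfun N0 N1 t x = (INF y \<in> {(x0, x1). x = x0 + x1}. N0 (fst y) + ennreal t * N1 (snd y))"

definition interp_norm ::
  "('a::plus \<Rightarrow> ennreal) \<Rightarrow> ('a \<Rightarrow> ennreal) \<Rightarrow> (real \<Rightarrow> real) \<Rightarrow> (int \<Rightarrow> real) \<Rightarrow> ennreal \<Rightarrow> 'a \<Rightarrow> ennreal" where
  "interp_norm N0 N1 \<phi> t p x = lnorm p (\<lambda>k. Kfun N0 N1 (t k) x / ennreal (\<phi> (t k)))"

text \<open>Equality of spaces with equivalent norms (norm \<open>\<infinity>\<close> means: not in the space).\<close>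
definition equiv_spaces :: "('a \<Rightarrow> ennreal) \<Rightarrow> ('a \<Rightarrow> ennreal) \<Rightarrow> bool" where
  "equiv_spaces N1 N2 \<longleftrightarrow>
     (\<exists>C>0. \<forall>x. N1 x \<le> ennreal C * N2 x \<and> N2 x \<le> ennreal C * N1 x)"

end

theory Submission
  imports Defs
begin

(* For the couple (l_q(v), l_q(w)) the K-functional K(t, x) is, up to absolute constants, the
   l_q norm of x with weight min(v_i, t w_i).  Put s_i = v_i / w_i and u_i = v_i / phi(s_i); then
   K(t_k, x) / phi(t_k) is comparable to the l_q norm of x_i u_i psi_k(s_i), where
   psi_k(y) = min(phi(y), t_k phi(y) / y) / phi(t_k).  Since phi(t_k) at least doubles and
   phi(t_k) / t_k at least halves from one k to the next, psi_k(y) <= 2 * 2^-|j - k| for y in the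
   j-th block (t_(j-1), t_j]; and the partition Z_1, Z_2 guarantees psi_k(y) >= 1/2 or
   psi_(k-1)(y) >= 1/2 for y in the k-th block.  The first bound, combined with a discrete
   convolution estimate for a geometric kernel, bounds the interpolation norm by the block norm;
   the second bounds the block norm by the interpolation norm. *)

lemma enn_powr_top [simp]: "enn_powr top r = top"
  by (simp add: enn_powr_def)

lemma enn_powr_ennreal [simp]: "0 \<le> c \<Longrightarrow> enn_powr (ennreal c) r = ennreal (c powr r)"
  by (simp add: enn_powr_def)

lemma enn_powr_zero [simp]: "enn_powr 0 r = 0"
  by (simp add: enn_powr_def)

lemma enn_powr_mono:
  assumes "a \<le> b" "0 \<le> r"
  shows "enn_powr a r \<le> enn_powr b r"
proof (cases b rule: ennreal_cases)
  case (real d)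
  with assms obtain c where "a = ennreal c" "0 \<le> c" "c \<le> d"
    by (metis ennreal_cases ennreal_le_iff ennreal_neq_top top.extremum_uniqueI)
  with real assms show ?thesis
    by (simp add: powr_mono2)
qed simp

lemma enn_powr_enn_powr_inverse [simp]:
  assumes "0 < r"
  shows "enn_powr (enn_powr a r) (1 / r) = a" and "enn_powr (enn_powr a (1 / r)) r = a"
  using assms by (cases a rule: ennreal_cases; simp add: powr_powr)+

lemma enn_powr_le_enn_powr_iff:
  assumes "0 < r"
  shows "enn_powr a r \<le> enn_powr b r \<longleftrightarrow> a \<le> b"
  using enn_powr_mono[of "enn_powr a r" "enn_powr b r" "1 / r"] enn_powr_mono[of a b r] assms
  by auto

lemma enn_powr_mult:
  assumes "0 < r"
  shows "enn_powr (a * b) r = enn_powr a r * enn_powr b r"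
proof (cases a rule: ennreal_cases; cases b rule: ennreal_cases)
  fix c d assume "a = ennreal c" "b = ennreal d" "0 \<le> c" "0 \<le> d"
  then show ?thesis
    by (simp add: ennreal_mult[symmetric] powr_mult del: ennreal_mult)
qed (use assms in \<open>auto simp: ennreal_mult_top ennreal_top_mult\<close>)

lemma enn_powr_le_self:
  assumes "a \<le> 1" "1 \<le> r"
  shows "enn_powr a r \<le> a"
proof -
  obtain c where "a = ennreal c" "0 \<le> c" "c \<le> 1"
    using assms(1) by (cases a rule: ennreal_cases) (auto simp: top_unique)
  with assms(2) show ?thesis
    using powr_mono'[of 1 r c] by simp
qed

lemma enn_powr_inverse_le_self:
  assumes "1 \<le> a" "1 \<le> r"
  shows "enn_powr a (1 / r) \<le> a"
proof (cases a rule: ennreal_cases)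
  case (real c)
  with assms have "c powr (1 / r) \<le> c powr 1"
    by (intro powr_mono) auto
  with real show ?thesis
    by simp
qed simp

lemma enn_powr_max: "0 \<le> r \<Longrightarrow> enn_powr (max a b) r = max (enn_powr a r) (enn_powr b r)"
  by (metis enn_powr_mono max.absorb1 max.absorb2 nle_le)

lemma le_enn_powr_inverse_iff:
  assumes "0 < r"
  shows "a \<le> enn_powr b (1 / r) \<longleftrightarrow> enn_powr a r \<le> b"
  using enn_powr_le_enn_powr_iff[OF assms, of a "enn_powr b (1 / r)"] assms by simp

lemma enn_powr_le_cmult_enn_powrD:
  assumes "enn_powr a r \<le> c * enn_powr b r" "1 \<le> c" "1 \<le> r"
  shows "a \<le> c * b"
proof -
  have "a \<le> enn_powr (c * enn_powr b r) (1 / r)"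
    using assms by (simp add: le_enn_powr_inverse_iff)
  also have "\<dots> = enn_powr c (1 / r) * b"
    using assms by (simp add: enn_powr_mult)
  also have "\<dots> \<le> c * b"
    using assms by (simp add: enn_powr_inverse_le_self mult_right_mono)
  finally show ?thesis .
qed

lemma infsum_ennreal_le_nn_integral:
  fixes f :: "'i \<Rightarrow> ennreal"
  shows "(\<Sum>\<^sub>\<infinity>i. f i) \<le> (\<integral>\<^sup>+i. f i \<partial>count_space UNIV)"
proof -
  have "(\<Sum>\<^sub>\<infinity>i. f i) = (SUP F\<in>{F. finite F \<and> F \<subseteq> UNIV}. sum f F)"
    by (rule nonneg_infsum_complete) simp
  also have "\<dots> \<le> (\<integral>\<^sup>+i. f i \<partial>count_space UNIV)"
  proof (rule SUP_least)
    fix F :: "'i set" assume "F \<in> {F. finite F \<and> F \<subseteq> UNIV}"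
    then have "sum f F = (\<integral>\<^sup>+i. f i \<partial>count_space F)"
      by (simp add: nn_integral_count_space_finite)
    also have "\<dots> = (\<integral>\<^sup>+i. f i * indicator F i \<partial>count_space UNIV)"
      by (simp add: nn_integral_count_space_indicator)
    also have "\<dots> \<le> (\<integral>\<^sup>+i. f i \<partial>count_space UNIV)"
      by (rule nn_integral_mono) (simp add: indicator_def)
    finally show "sum f F \<le> (\<integral>\<^sup>+i. f i \<partial>count_space UNIV)" .
  qed
  finally show ?thesis .
qed

lemma infsum_ennreal_eq_nn_integral:
  fixes f :: "'i::countable \<Rightarrow> ennreal"
  shows "(\<Sum>\<^sub>\<infinity>i. f i) = (\<integral>\<^sup>+i. f i \<partial>count_space UNIV)"
proof (rule antisym[OF infsum_ennreal_le_nn_integral])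
  show "(\<integral>\<^sup>+i. f i \<partial>count_space UNIV) \<le> (\<Sum>\<^sub>\<infinity>i. f i)"
  proof (cases "finite (UNIV :: 'i set)")
    case True
    then show ?thesis
      by (simp add: nn_integral_count_space_finite)
  next
    case False
    define g where "g = from_nat_into (UNIV :: 'i set)"
    have g: "bij_betw g UNIV UNIV"
      unfolding g_def using False by (intro bij_betw_from_nat_into) auto
    have "(\<integral>\<^sup>+i. f i \<partial>count_space UNIV) = (SUP n. \<Sum>m<n. f (g m))"
      by (simp add: nn_integral_bij_count_space[OF g, symmetric] nn_integral_count_space_nat
          suminf_eq_SUP)
    also have "\<dots> \<le> (\<Sum>\<^sub>\<infinity>i. f i)"
    proof (rule SUP_least)
      fix n
      have "inj_on g {..<n}"
        using g by (meson bij_betw_def inj_on_subset subset_UNIV)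
      then have "(\<Sum>m<n. f (g m)) = (\<Sum>\<^sub>\<infinity>i\<in>g ` {..<n}. f i)"
        by (simp add: sum.reindex)
      also have "\<dots> \<le> (\<Sum>\<^sub>\<infinity>i. f i)"
        by (rule infsum_mono_neutral) (auto intro: nonneg_summable_on_complete)
      finally show "(\<Sum>m<n. f (g m)) \<le> (\<Sum>\<^sub>\<infinity>i. f i)" .
    qed
    finally show ?thesis .
  qed
qed

lemma lnorm_top: "lnorm top a = (SUP i. a i)"
  by (simp add: lnorm_def)

lemma lnorm_ennreal:
  fixes a :: "'i::countable \<Rightarrow> ennreal"
  assumes "0 \<le> r"
  shows "lnorm (ennreal r) a = enn_powr (\<integral>\<^sup>+i. enn_powr (a i) r \<partial>count_space UNIV) (1 / r)"
  using assms by (simp add: lnorm_def infsum_ennreal_eq_nn_integral)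

lemma enn_powr_lnorm:
  fixes a :: "'i::countable \<Rightarrow> ennreal"
  assumes "0 < r"
  shows "enn_powr (lnorm (ennreal r) a) r = (\<integral>\<^sup>+i. enn_powr (a i) r \<partial>count_space UNIV)"
  using assms by (simp add: lnorm_ennreal)

lemma ennreal_ge_1_cases:
  assumes "1 \<le> p"
  obtains "p = top" | r where "1 \<le> r" "p = ennreal r"
  using assms by (cases p rule: ennreal_cases) auto

lemma lnorm_mono:
  assumes "\<And>i. a i \<le> b i"
  shows "lnorm p a \<le> lnorm p b"
proof -
  have "(\<Sum>\<^sub>\<infinity>i. enn_powr (a i) r) \<le> (\<Sum>\<^sub>\<infinity>i. enn_powr (b i) r)" if "0 \<le> r" for r
    using assms that
    by (intro infsum_mono) (auto simp: enn_powr_mono intro: nonneg_summable_on_complete)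
  then show ?thesis
    using assms by (auto simp: lnorm_def SUP_mono' enn_powr_mono)
qed

lemma lnorm_cmult:
  fixes a :: "'i::countable \<Rightarrow> ennreal"
  assumes "1 \<le> p"
  shows "lnorm p (\<lambda>i. c * a i) = c * lnorm p a"
  using assms
proof (cases rule: ennreal_ge_1_cases)
  case 1
  then show ?thesis
    by (simp add: lnorm_top SUP_mult_left_ennreal)
next
  case (2 r)
  then have "(\<integral>\<^sup>+i. enn_powr (c * a i) r \<partial>count_space UNIV)
      = enn_powr c r * (\<integral>\<^sup>+i. enn_powr (a i) r \<partial>count_space UNIV)"
    by (simp add: enn_powr_mult nn_integral_cmult)
  with 2 show ?thesis
    by (simp add: lnorm_ennreal enn_powr_mult)
qed

lemma lnorm_ge_component:
  fixes a :: "'i::countable \<Rightarrow> ennreal"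
  assumes "1 \<le> p"
  shows "a i \<le> lnorm p a"
  using assms
proof (cases rule: ennreal_ge_1_cases)
  case 1
  then show ?thesis
    by (simp add: lnorm_top SUP_upper)
next
  case (2 r)
  then have "enn_powr (a i) r \<le> enn_powr (lnorm p a) r"
    using nn_integral_ge_point[of i UNIV "\<lambda>i. enn_powr (a i) r"] by (simp add: enn_powr_lnorm)
  with 2 show ?thesis
    by (simp add: enn_powr_le_enn_powr_iff)
qed

lemma lnorm_max_le:
  fixes a b :: "'i::countable \<Rightarrow> ennreal"
  assumes "1 \<le> p"
  shows "lnorm p (\<lambda>i. max (a i) (b i)) \<le> 2 * max (lnorm p a) (lnorm p b)"
  using assms
proof (cases rule: ennreal_ge_1_cases)
  case 1
  have "(SUP i. max (a i) (b i)) \<le> max (SUP i. a i) (SUP i. b i)"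
    by (rule SUP_least) (meson SUP_upper UNIV_I max.mono)
  also have "\<dots> \<le> 2 * max (SUP i. a i) (SUP i. b i)"
    by (metis add_increasing2 mult_2 order_refl zero_le)
  finally show ?thesis
    using 1 by (simp add: lnorm_top)
next
  case (2 r)
  define A B where "A = enn_powr (lnorm p a) r" and "B = enn_powr (lnorm p b) r"
  have "enn_powr (lnorm p (\<lambda>i. max (a i) (b i))) r
      \<le> (\<integral>\<^sup>+i. enn_powr (a i) r + enn_powr (b i) r \<partial>count_space UNIV)"
    using 2 by (simp add: enn_powr_lnorm enn_powr_max nn_integral_mono add_increasing
        add_increasing2)
  also have "\<dots> = A + B"
    using 2 by (simp add: A_def B_def enn_powr_lnorm nn_integral_add)
  also have "\<dots> \<le> 2 * max A B"
    by (metis add_mono max.cobounded1 max.cobounded2 mult_2)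
  also have "\<dots> \<le> enn_powr 2 r * max A B"
  proof (rule mult_right_mono)
    have "ennreal (2 powr 1) \<le> ennreal (2 powr r)"
      using 2 by (intro ennreal_leI powr_mono) auto
    then show "2 \<le> enn_powr 2 r"
      using enn_powr_ennreal[of 2 r] by simp
  qed simp
  also have "\<dots> = enn_powr (2 * max (lnorm p a) (lnorm p b)) r"
    using 2 by (simp add: A_def B_def enn_powr_mult enn_powr_max)
  finally show ?thesis
    using 2 by (simp add: enn_powr_le_enn_powr_iff)
qed

text \<open>A quasi-triangle inequality suffices, since all estimates are up to constants.\<close>

lemma lnorm_add_le:
  fixes a b :: "'i::countable \<Rightarrow> ennreal"
  assumes "1 \<le> p"
  shows "lnorm p (\<lambda>i. a i + b i) \<le> 4 * (lnorm p a + lnorm p b)"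
proof -
  have "lnorm p (\<lambda>i. a i + b i) \<le> lnorm p (\<lambda>i. 2 * max (a i) (b i))"
    by (rule lnorm_mono) (metis add_mono max.cobounded1 max.cobounded2 mult_2)
  also have "\<dots> = 2 * lnorm p (\<lambda>i. max (a i) (b i))"
    using assms by (rule lnorm_cmult)
  also have "\<dots> \<le> 2 * (2 * max (lnorm p a) (lnorm p b))"
    using assms by (intro mult_left_mono lnorm_max_le) auto
  also have "\<dots> = 4 * max (lnorm p a) (lnorm p b)"
    by (simp add: mult.assoc[symmetric])
  also have "\<dots> \<le> 4 * (lnorm p a + lnorm p b)"
    by (intro mult_left_mono) (auto simp: add_increasing add_increasing2)
  finally show ?thesis .
qed

lemma lnorm_reindex:
  assumes "bij g"
  shows "lnorm p (\<lambda>i. a (g i)) = lnorm p a"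
  using assms by (simp add: lnorm_def bij_is_surj image_image[symmetric, of a g]
      infsum_reindex_bij_betw[of g UNIV UNIV "\<lambda>i. enn_powr (a i) (enn2real p)"])

lemma nn_integral_count_space_fibres:
  fixes F :: "'i::countable \<Rightarrow> ennreal" and f :: "'i \<Rightarrow> 'j::countable"
  shows "(\<integral>\<^sup>+i. F i \<partial>count_space UNIV)
    = (\<integral>\<^sup>+j. (\<integral>\<^sup>+i. (if f i = j then F i else 0) \<partial>count_space UNIV) \<partial>count_space UNIV)"
proof -
  have "F i = (\<integral>\<^sup>+j. (if f i = j then F i else 0) \<partial>count_space UNIV)" for i
    by (subst nn_integral_count_space'[of "{f i}"]) auto
  then show ?thesis
    by (simp add: nn_integral_count_space_nn_integral[symmetric])
qed

lemma nn_integral_powr_weighted_blocks_le: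
  fixes h :: "'i::countable \<Rightarrow> ennreal" and blk :: "'i \<Rightarrow> 'j::countable"
    and \<omega> :: "'j \<Rightarrow> ennreal"
  assumes "1 \<le> r" and \<omega>_le_1: "\<And>j. \<omega> j \<le> 1"
  shows "(\<integral>\<^sup>+i. enn_powr ((\<omega> (blk i))\<^sup>2 * h i) r \<partial>count_space UNIV)
    \<le> (\<integral>\<^sup>+j. \<omega> j \<partial>count_space UNIV)
      * enn_powr (SUP j. \<omega> j * lnorm (ennreal r) (\<lambda>i. if blk i = j then h i else 0)) r"
    (is "_ \<le> _ * enn_powr ?D r")
proof -
  define B where "B j = lnorm (ennreal r) (\<lambda>i. if blk i = j then h i else 0)" for j
  have block_le: "(\<integral>\<^sup>+i. (if blk i = j then enn_powr ((\<omega> (blk i))\<^sup>2 * h i) r else 0)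
      \<partial>count_space UNIV) \<le> \<omega> j * enn_powr ?D r" for j
  proof -
    have "(\<integral>\<^sup>+i. (if blk i = j then enn_powr ((\<omega> (blk i))\<^sup>2 * h i) r else 0) \<partial>count_space UNIV)
        = (\<integral>\<^sup>+i. enn_powr (\<omega> j * (\<omega> j * (if blk i = j then h i else 0))) r \<partial>count_space UNIV)"
      by (rule nn_integral_cong) (simp add: power2_eq_square mult.assoc)
    also have "\<dots> = enn_powr (lnorm (ennreal r) (\<lambda>i. \<omega> j * (\<omega> j * (if blk i = j then h i else 0)))) r"
      using assms(1) by (simp add: enn_powr_lnorm)
    also have "\<dots> = enn_powr (\<omega> j) r * enn_powr (\<omega> j * B j) r"
      using assms(1) by (simp add: lnorm_cmult B_def enn_powr_mult)
    \<comment> \<open>one factor \<open>\<omega> j\<close> is absorbed into the supremum, the other is summed over \<open>j\<close>\<close>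
    also have "\<dots> \<le> \<omega> j * enn_powr ?D r"
      using assms \<omega>_le_1 by (intro mult_mono enn_powr_le_self enn_powr_mono)
        (auto simp: B_def intro: SUP_upper)
    finally show ?thesis .
  qed
  have "(\<integral>\<^sup>+i. enn_powr ((\<omega> (blk i))\<^sup>2 * h i) r \<partial>count_space UNIV)
      = (\<integral>\<^sup>+j. (\<integral>\<^sup>+i. (if blk i = j then enn_powr ((\<omega> (blk i))\<^sup>2 * h i) r else 0)
        \<partial>count_space UNIV) \<partial>count_space UNIV)"
    by (rule nn_integral_count_space_fibres)
  also have "\<dots> \<le> (\<integral>\<^sup>+j. \<omega> j * enn_powr ?D r \<partial>count_space UNIV)"
    by (intro nn_integral_mono block_le)
  also have "\<dots> = (\<integral>\<^sup>+j. \<omega> j \<partial>count_space UNIV) * enn_powr ?D r"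
    by (rule nn_integral_multc) simp
  finally show ?thesis .
qed

lemma lnorm_weighted_blocks_le_SUP:
  fixes h :: "'i::countable \<Rightarrow> ennreal" and blk :: "'i \<Rightarrow> 'j::countable"
    and \<omega> :: "'j \<Rightarrow> ennreal"
  assumes "1 \<le> q" and \<omega>_le_1: "\<And>j. \<omega> j \<le> 1" and \<omega>_sum: "(\<Sum>\<^sub>\<infinity>j. \<omega> j) \<le> c" and "1 \<le> c"
  shows "lnorm q (\<lambda>i. (\<omega> (blk i))\<^sup>2 * h i)
    \<le> c * (SUP j. \<omega> j * lnorm q (\<lambda>i. if blk i = j then h i else 0))"
    (is "_ \<le> _ * ?D")
  using \<open>1 \<le> q\<close>
proof (cases rule: ennreal_ge_1_cases)
  case 1
  have "(\<omega> (blk i))\<^sup>2 * h i \<le> ?D" for i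
  proof -
    have "(\<omega> (blk i))\<^sup>2 \<le> \<omega> (blk i)"
      using \<omega>_le_1 by (simp add: power2_eq_square mult_left_le)
    moreover have "h i \<le> lnorm q (\<lambda>i'. if blk i' = blk i then h i' else 0)"
      using lnorm_ge_component[OF \<open>1 \<le> q\<close>, of "\<lambda>i'. if blk i' = blk i then h i' else 0" i]
      by simp
    ultimately have "(\<omega> (blk i))\<^sup>2 * h i \<le> \<omega> (blk i) * lnorm q (\<lambda>i'. if blk i' = blk i then h i' else 0)"
      by (rule mult_mono) auto
    also have "\<dots> \<le> ?D"
      by (rule SUP_upper) simp
    finally show ?thesis .
  qed
  then have "lnorm q (\<lambda>i. (\<omega> (blk i))\<^sup>2 * h i) \<le> ?D"
    by (simp add: 1 lnorm_top SUP_least)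
  also have "\<dots> \<le> c * ?D"
    using \<open>1 \<le> c\<close> mult_right_mono[of 1 c ?D] by simp
  finally show ?thesis .
next
  case (2 r)
  have "enn_powr (lnorm q (\<lambda>i. (\<omega> (blk i))\<^sup>2 * h i)) r
      = (\<integral>\<^sup>+i. enn_powr ((\<omega> (blk i))\<^sup>2 * h i) r \<partial>count_space UNIV)"
    using 2 by (simp add: enn_powr_lnorm)
  also have "\<dots> \<le> (\<integral>\<^sup>+j. \<omega> j \<partial>count_space UNIV) * enn_powr ?D r"
    using 2 \<omega>_le_1 by (simp add: nn_integral_powr_weighted_blocks_le)
  also have "\<dots> \<le> c * enn_powr ?D r"
    using \<omega>_sum by (simp add: infsum_ennreal_eq_nn_integral mult_right_mono)
  finally show ?thesis
    by (rule enn_powr_le_cmult_enn_powrD[OF _ \<open>1 \<le> c\<close> \<open>1 \<le> r\<close>])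
qed

lemma enn_powr_weighted_SUP_le:
  fixes B :: "'j \<Rightarrow> ennreal" and \<omega> :: "'j \<Rightarrow> ennreal"
  assumes "1 \<le> r" and \<omega>_le_1: "\<And>j. \<omega> j \<le> 1"
  shows "enn_powr (SUP j. \<omega> j * B j) r \<le> (\<integral>\<^sup>+j. \<omega> j * enn_powr (B j) r \<partial>count_space UNIV)"
proof -
  have "enn_powr (\<omega> j * B j) r \<le> (\<integral>\<^sup>+j. \<omega> j * enn_powr (B j) r \<partial>count_space UNIV)" for j
  proof -
    have "enn_powr (\<omega> j * B j) r \<le> \<omega> j * enn_powr (B j) r"
      using assms by (simp add: enn_powr_mult enn_powr_le_self mult_right_mono)
    also have "\<dots> \<le> (\<integral>\<^sup>+j. \<omega> j * enn_powr (B j) r \<partial>count_space UNIV)"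
      by (rule nn_integral_ge_point) simp
    finally show ?thesis .
  qed
  then have "(SUP j. \<omega> j * B j)
      \<le> enn_powr (\<integral>\<^sup>+j. \<omega> j * enn_powr (B j) r \<partial>count_space UNIV) (1 / r)"
    using assms(1) by (intro SUP_least) (simp add: le_enn_powr_inverse_iff)
  then show ?thesis
    using assms(1) by (simp add: le_enn_powr_inverse_iff)
qed

lemma lnorm_weighted_SUP_le:
  fixes B :: "'j::countable \<Rightarrow> ennreal" and \<omega> :: "'k::countable \<Rightarrow> 'j \<Rightarrow> ennreal"
  assumes "1 \<le> p" and \<omega>_le_1: "\<And>k j. \<omega> k j \<le> 1" and \<omega>_sum: "\<And>j. (\<Sum>\<^sub>\<infinity>k. \<omega> k j) \<le> c"
    and "1 \<le> c"
  shows "lnorm p (\<lambda>k. SUP j. \<omega> k j * B j) \<le> c * lnorm p B"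
  using \<open>1 \<le> p\<close>
proof (cases rule: ennreal_ge_1_cases)
  case 1
  have "\<omega> k j * B j \<le> (SUP j. B j)" for k j
    using \<omega>_le_1 mult_right_mono[of "\<omega> k j" 1 "B j"] by (simp add: SUP_upper2)
  then have "(SUP k. SUP j. \<omega> k j * B j) \<le> (SUP j. B j)"
    by (intro SUP_least)
  also have "\<dots> \<le> c * (SUP j. B j)"
    using \<open>1 \<le> c\<close> mult_right_mono[of 1 c "SUP j. B j"] by simp
  finally show ?thesis
    using 1 by (simp add: lnorm_top)
next
  case (2 r)
  have "enn_powr (lnorm p (\<lambda>k. SUP j. \<omega> k j * B j)) r
      \<le> (\<integral>\<^sup>+k. (\<integral>\<^sup>+j. \<omega> k j * enn_powr (B j) r \<partial>count_space UNIV) \<partial>count_space UNIV)"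
    using 2 \<omega>_le_1 by (simp add: enn_powr_lnorm enn_powr_weighted_SUP_le nn_integral_mono)
  also have "\<dots> = (\<integral>\<^sup>+j. (\<integral>\<^sup>+k. \<omega> k j \<partial>count_space UNIV) * enn_powr (B j) r \<partial>count_space UNIV)"
    by (simp add: nn_integral_count_space_nn_integral nn_integral_multc)
  also have "\<dots> \<le> (\<integral>\<^sup>+j. c * enn_powr (B j) r \<partial>count_space UNIV)"
    using \<omega>_sum by (intro nn_integral_mono mult_right_mono) (simp_all add: infsum_ennreal_eq_nn_integral)
  also have "\<dots> = c * enn_powr (lnorm p B) r"
    using 2 by (simp add: enn_powr_lnorm nn_integral_cmult)
  finally show ?thesis
    by (rule enn_powr_le_cmult_enn_powrD[OF _ \<open>1 \<le> c\<close> \<open>1 \<le> r\<close>])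
qed

section \<open>The K-functional of a weighted \<open>l_q\<close> couple\<close>

lemma Kfun_le_lnorm_min_weight:
  fixes v w x :: "int \<Rightarrow> real"
  assumes "1 \<le> q" "\<And>i. 0 \<le> v i" "\<And>i. 0 \<le> w i" "0 \<le> \<tau>"
  shows "Kfun (lq_weighted_norm q v) (lq_weighted_norm q w) \<tau> x
    \<le> 2 * lnorm q (\<lambda>i. ennreal (\<bar>x i\<bar> * min (v i) (\<tau> * w i)))"
    (is "_ \<le> 2 * ?M")
proof -
  define x0 where "x0 i = (if v i \<le> \<tau> * w i then x i else 0)" for i
  define x1 where "x1 i = (if v i \<le> \<tau> * w i then 0 else x i)" for i
  have "x = x0 + x1"
    by (simp add: x0_def x1_def fun_eq_iff)
  then have "Kfun (lq_weighted_norm q v) (lq_weighted_norm q w) \<tau> x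
      \<le> lq_weighted_norm q v x0 + ennreal \<tau> * lq_weighted_norm q w x1"
    unfolding Kfun_def by (intro INF_lower2[of "(x0, x1)"]) auto
  also have "\<dots> = lnorm q (\<lambda>i. ennreal \<bar>x0 i * v i\<bar>) + lnorm q (\<lambda>i. ennreal (\<tau> * \<bar>x1 i * w i\<bar>))"
    using assms by (simp add: lq_weighted_norm_def lnorm_cmult[symmetric] ennreal_mult)
  also have "\<dots> \<le> ?M + ?M"
    using assms by (intro add_mono lnorm_mono)
      (auto simp: x0_def x1_def abs_mult min_def mult_left_mono)
  finally show ?thesis
    by (simp add: mult_2)
qed

lemma lnorm_min_weight_le_decomposition:
  fixes v w x x0 x1 :: "int \<Rightarrow> real"
  assumes "1 \<le> q" "\<And>i. 0 \<le> v i" "\<And>i. 0 \<le> w i" "0 \<le> \<tau>" "x = x0 + x1"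
  shows "lnorm q (\<lambda>i. ennreal (\<bar>x i\<bar> * min (v i) (\<tau> * w i)))
    \<le> 4 * (lq_weighted_norm q v x0 + ennreal \<tau> * lq_weighted_norm q w x1)"
proof -
  have "\<bar>x i\<bar> * min (v i) (\<tau> * w i) \<le> \<bar>x0 i * v i\<bar> + \<tau> * \<bar>x1 i * w i\<bar>" for i
  proof -
    have "\<bar>x i\<bar> * min (v i) (\<tau> * w i) \<le> (\<bar>x0 i\<bar> + \<bar>x1 i\<bar>) * min (v i) (\<tau> * w i)"
      using assms by (intro mult_right_mono) (auto simp: abs_triangle_ineq)
    also have "\<dots> \<le> \<bar>x0 i\<bar> * v i + \<bar>x1 i\<bar> * (\<tau> * w i)"
      by (simp add: distrib_right add_mono mult_left_mono)
    finally show ?thesis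
      using assms by (simp add: abs_mult mult_ac)
  qed
  then have "lnorm q (\<lambda>i. ennreal (\<bar>x i\<bar> * min (v i) (\<tau> * w i)))
      \<le> lnorm q (\<lambda>i. ennreal \<bar>x0 i * v i\<bar> + ennreal \<tau> * ennreal \<bar>x1 i * w i\<bar>)"
    using assms by (intro lnorm_mono) (simp add: ennreal_plus[symmetric] ennreal_mult[symmetric]
        ennreal_leI del: ennreal_plus)
  also have "\<dots> \<le> 4 * (lnorm q (\<lambda>i. ennreal \<bar>x0 i * v i\<bar>)
      + lnorm q (\<lambda>i. ennreal \<tau> * ennreal \<bar>x1 i * w i\<bar>))"
    using assms(1) by (rule lnorm_add_le)
  also have "\<dots> = 4 * (lq_weighted_norm q v x0 + ennreal \<tau> * lq_weighted_norm q w x1)"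
    by (simp add: lq_weighted_norm_def lnorm_cmult[OF assms(1)])
  finally show ?thesis .
qed

lemma lnorm_min_weight_le_Kfun:
  fixes v w x :: "int \<Rightarrow> real"
  assumes "1 \<le> q" "\<And>i. 0 \<le> v i" "\<And>i. 0 \<le> w i" "0 \<le> \<tau>"
  shows "lnorm q (\<lambda>i. ennreal (\<bar>x i\<bar> * min (v i) (\<tau> * w i)))
    \<le> 4 * Kfun (lq_weighted_norm q v) (lq_weighted_norm q w) \<tau> x"
    (is "?M \<le> 4 * _")
proof -
  have four: "(4::ennreal) \<noteq> 0" "(4::ennreal) \<noteq> top"
    by simp_all
  have "?M / 4 \<le> Kfun (lq_weighted_norm q v) (lq_weighted_norm q w) \<tau> x"
    unfolding Kfun_def
  proof (rule INF_greatest)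
    fix y assume "y \<in> {(x0, x1). x = x0 + x1}"
    then obtain x0 x1 where y: "y = (x0, x1)" "x = x0 + x1"
      by auto
    then have "?M / 4 \<le> 4 * (lq_weighted_norm q v x0 + ennreal \<tau> * lq_weighted_norm q w x1) / 4"
      using assms by (intro divide_right_mono_ennreal lnorm_min_weight_le_decomposition)
    then show "?M / 4 \<le> lq_weighted_norm q v (fst y) + ennreal \<tau> * lq_weighted_norm q w (snd y)"
      using four y(1) by (metis ennreal_mult_divide_eq mult.commute fst_conv snd_conv)
  qed
  then have "4 * (?M / 4) \<le> 4 * Kfun (lq_weighted_norm q v) (lq_weighted_norm q w) \<tau> x"
    by (rule mult_left_mono) simp
  then show ?thesis
    using four by (metis ennreal_mult_divide_eq ennreal_times_divide mult.commute)
qed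

lemma strongly_increasing_pos: "strongly_increasing a \<Longrightarrow> 0 < a k"
  by (simp add: strongly_increasing_def)

lemma strongly_increasing_doubles: "strongly_increasing a \<Longrightarrow> 2 * a k \<le> a (k + 1)"
  by (simp add: strongly_increasing_def le_divide_eq)

lemma strongly_decreasing_halves:
  assumes "strongly_decreasing a"
  shows "2 * a (k + 1) \<le> a k"
proof -
  have "0 < a k" "a (k + 1) / a k \<le> 1 / 2"
    using assms by (simp_all add: strongly_decreasing_def)
  then show ?thesis
    by (simp add: divide_le_eq)
qed

lemma strongly_increasing_geometric:
  assumes "strongly_increasing a" "j \<le> k"
  shows "2 ^ nat (k - j) * a j \<le> a k"
  using assms(2)
proof (induction k rule: int_ge_induct)
  case (step m)
  have "nat (m + 1 - j) = Suc (nat (m - j))"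
    using step.hyps by simp
  then have "2 ^ nat (m + 1 - j) * a j = 2 * (2 ^ nat (m - j) * a j)"
    by simp
  also have "\<dots> \<le> 2 * a m"
    using step.IH by simp
  also have "\<dots> \<le> a (m + 1)"
    using strongly_increasing_doubles[OF assms(1)] .
  finally show ?case .
qed simp

lemma strongly_decreasing_geometric:
  assumes "strongly_decreasing a" "j \<le> k"
  shows "2 ^ nat (k - j) * a k \<le> a j"
  using assms(2)
proof (induction k rule: int_ge_induct)
  case (step m)
  have "nat (m + 1 - j) = Suc (nat (m - j))"
    using step.hyps by simp
  then have "2 ^ nat (m + 1 - j) * a (m + 1) = 2 ^ nat (m - j) * (2 * a (m + 1))"
    by simp
  also have "\<dots> \<le> 2 ^ nat (m - j) * a m"
    using strongly_decreasing_halves[OF assms(1)] by simp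
  also have "\<dots> \<le> a j"
    using step.IH .
  finally show ?case .
qed simp

lemma strongly_increasing_mono:
  assumes "strongly_increasing a" "j \<le> k"
  shows "a j \<le> a k"
proof -
  have "1 * a j \<le> 2 ^ nat (k - j) * a j"
    using strongly_increasing_pos[OF assms(1), of j] by (intro mult_right_mono) auto
  then show ?thesis
    using strongly_increasing_geometric[OF assms] by simp
qed

lemma strongly_increasing_unbounded:
  assumes "strongly_increasing a"
  obtains k where "y \<le> a k"
proof -
  obtain n where "y / a 0 < 2 ^ n"
    using real_arch_pow[of 2 "y / a 0"] by auto
  then have "y \<le> 2 ^ nat (int n - 0) * a 0"
    using strongly_increasing_pos[OF assms] by (simp add: divide_less_eq less_imp_le)
  also have "\<dots> \<le> a (int n)"
    using assms by (rule strongly_increasing_geometric) simp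
  finally show ?thesis
    using that by blast
qed

lemma strongly_increasing_below:
  assumes "strongly_increasing a" "0 < y"
  obtains k where "a k < y"
proof -
  obtain n where "a 0 / y < 2 ^ n"
    using real_arch_pow[of 2 "a 0 / y"] by auto
  then have "a 0 < 2 ^ n * y"
    using assms(2) by (simp add: divide_less_eq mult.commute)
  moreover have "2 ^ n * a (- int n) \<le> a 0"
    using strongly_increasing_geometric[OF assms(1), of "- int n" 0] by simp
  ultimately have "2 ^ n * a (- int n) < 2 ^ n * y"
    by linarith
  then have "a (- int n) < y"
    by simp
  then show ?thesis
    using that by blast
qed

text \<open>Unspecified for \<open>y \<le> 0\<close>, where no such \<open>k\<close> exists.\<close>

definition block :: "(int \<Rightarrow> real) \<Rightarrow> real \<Rightarrow> int" where
  "block t y = (THE k. t (k - 1) < y \<and> y \<le> t k)"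

lemma strongly_increasing_interval_unique:
  assumes "strongly_increasing t" "t (k - 1) < y" "y \<le> t k" "t (k' - 1) < y" "y \<le> t k'"
  shows "k = k'"
proof (rule ccontr)
  assume "k \<noteq> k'"
  then have "k \<le> k' - 1 \<or> k' \<le> k - 1"
    by linarith
  then show False
    using assms strongly_increasing_mono[OF assms(1)] by (meson not_le order_trans)
qed

lemma strongly_increasing_interval_exists:
  assumes "strongly_increasing t" "0 < y"
  shows "\<exists>k. t (k - 1) < y \<and> y \<le> t k"
proof -
  obtain a where a: "t a < y"
    using strongly_increasing_below[OF assms] .
  obtain b where b: "y \<le> t b"
    using strongly_increasing_unbounded[OF assms(1)] .
  define d where "d = (LEAST d. y \<le> t (a + int d))"
  have "y \<le> t (a + int (nat (b - a)))"
    using a b strongly_increasing_mono[OF assms(1), of b a] by (cases "a \<le> b") auto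
  then have d: "y \<le> t (a + int d)"
    unfolding d_def by (rule LeastI)
  then have "d \<noteq> 0"
    using a by (intro notI) simp
  then have "\<not> y \<le> t (a + int (d - 1))"
    unfolding d_def by (intro not_less_Least) simp
  with d \<open>d \<noteq> 0\<close> have "t (a + int d - 1) < y \<and> y \<le> t (a + int d)"
    by (simp add: of_nat_diff add_diff_eq)
  then show ?thesis ..
qed

lemma block_eq_iff:
  assumes "strongly_increasing t" "0 < y"
  shows "block t y = k \<longleftrightarrow> t (k - 1) < y \<and> y \<le> t k"
proof -
  have "t (block t y - 1) < y \<and> y \<le> t (block t y)"
    unfolding block_def
    by (rule theI') (use strongly_increasing_interval_exists[OF assms]
        strongly_increasing_interval_unique[OF assms(1)] in blast)
  then show ?thesis
    using strongly_increasing_interval_unique[OF assms(1)] by blast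
qed

section \<open>Discretization of a quasi-concave function\<close>

text \<open>Since \<open>(3/4)\<^sup>2 > 1/2\<close>, the square of this kernel dominates \<open>2 ^ - \<bar>n\<bar>\<close>,
  while the kernel itself is still summable.\<close>

definition decay :: "int \<Rightarrow> ennreal" where
  "decay n = ennreal ((3 / 4) ^ nat \<bar>n\<bar>)"

lemma decay_le_1: "decay n \<le> 1"
  by (simp add: decay_def power_le_one)

lemma decay_minus: "decay (- n) = decay n"
  by (simp add: decay_def)

lemma inverse_two_power_le_decay_sq: "ennreal (1 / 2 ^ nat \<bar>n\<bar>) \<le> (decay n)\<^sup>2"
proof -
  have "1 / 2 ^ nat \<bar>n\<bar> \<le> ((3 / 4) ^ 2 :: real) ^ nat \<bar>n\<bar>"
    by (simp add: power_one_over[symmetric] power_mono power2_eq_square)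
  also have "\<dots> = ((3 / 4) ^ nat \<bar>n\<bar>)\<^sup>2"
    by (simp add: power_mult[symmetric] mult.commute)
  finally show ?thesis
    by (simp add: decay_def ennreal_power ennreal_leI)
qed

lemma infsum_decay_le: "(\<Sum>\<^sub>\<infinity>j. decay (j - k)) \<le> 8"
proof -
  define A where "A j = (if 0 \<le> j then decay j else 0)" for j
  have sum_A: "(\<Sum>\<^sub>\<infinity>j. A j) = 4"
  proof -
    have "(\<Sum>\<^sub>\<infinity>j. A j) = (\<Sum>\<^sub>\<infinity>j\<in>{0..}. decay j)"
      by (intro infsum_cong_neutral) (auto simp: A_def)
    also have "\<dots> = (\<Sum>\<^sub>\<infinity>n. decay (int n))"
      by (rule infsum_reindex_bij_betw[symmetric])
        (auto simp: bij_betw_def image_def intro!: exI[of _ "nat _"])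
    also have "\<dots> = (\<Sum>n. ennreal ((3 / 4) ^ n))"
      by (simp add: infsum_ennreal_eq_nn_integral nn_integral_count_space_nat decay_def)
    also have "\<dots> = ennreal (\<Sum>n. (3 / 4) ^ n)"
      by (rule suminf_ennreal2) (auto intro: summable_geometric)
    also have "(\<Sum>n. (3 / 4 :: real) ^ n) = 4"
      by (subst suminf_geometric) auto
    finally show ?thesis
      by simp
  qed
  have "(\<Sum>\<^sub>\<infinity>j. decay (j - k)) = (\<Sum>\<^sub>\<infinity>j. decay j)"
    by (rule infsum_reindex_bij_betw[of "\<lambda>j. j - k"])
      (auto simp: bij_betw_def inj_on_def image_def intro!: exI[of _ "_ + k"])
  also have "\<dots> \<le> (\<Sum>\<^sub>\<infinity>j. A j + A (- j))"
    by (intro infsum_mono) (auto simp: A_def decay_minus intro: nonneg_summable_on_complete)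
  also have "\<dots> = (\<Sum>\<^sub>\<infinity>j. A j) + (\<Sum>\<^sub>\<infinity>j. A (- j))"
    by (intro infsum_add) (auto intro: nonneg_summable_on_complete)
  also have "(\<Sum>\<^sub>\<infinity>j. A (- j)) = (\<Sum>\<^sub>\<infinity>j. A j)"
    by (rule infsum_reindex_bij_betw[of uminus])
      (auto simp: bij_betw_def inj_on_def image_def intro!: exI[of _ "- _"])
  finally show ?thesis
    by (simp add: sum_A)
qed

locale discretized_quasi_concave =
  fixes \<phi> :: "real \<Rightarrow> real" and t :: "int \<Rightarrow> real"
  assumes quasi_concave: "nondeg_quasi_concave \<phi>"
    and discretizing: "discretizing_sequence \<phi> t"
begin

lemma phi_pos: "0 < y \<Longrightarrow> 0 < \<phi> y"
  using quasi_concave by (simp add: nondeg_quasi_concave_def)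

lemma phi_mono: "0 < y \<Longrightarrow> y \<le> z \<Longrightarrow> \<phi> y \<le> \<phi> z"
  using quasi_concave by (simp add: nondeg_quasi_concave_def)

lemma phi_div_antimono: "0 < y \<Longrightarrow> y \<le> z \<Longrightarrow> \<phi> z / z \<le> \<phi> y / y"
  using quasi_concave by (simp add: nondeg_quasi_concave_def)

lemma t_strongly_increasing: "strongly_increasing t"
  and phi_t_strongly_increasing: "strongly_increasing (\<lambda>k. \<phi> (t k))"
  and phi_t_div_strongly_decreasing: "strongly_decreasing (\<lambda>k. \<phi> (t k) / t k)"
  using discretizing by (simp_all add: discretizing_sequence_def)

lemma t_pos: "0 < t k"
  using strongly_increasing_pos[OF t_strongly_increasing] .

lemma phi_t_step_cases:
  "\<phi> (t k) \<le> 2 * \<phi> (t (k - 1)) \<or> \<phi> (t (k - 1)) / t (k - 1) \<le> 2 * (\<phi> (t k) / t k)"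
proof -
  obtain Z1 Z2 where "Z1 \<union> Z2 = UNIV"
    and Z1: "\<forall>k\<in>Z1. \<phi> (t (k + 1)) \<le> 2 * \<phi> (t k)"
    and Z2: "\<forall>k\<in>Z2. \<phi> (t k) / t k \<le> 2 * (\<phi> (t (k + 1)) / t (k + 1))"
    using discretizing unfolding discretizing_sequence_def by blast
  then have "k - 1 \<in> Z1 \<or> k - 1 \<in> Z2"
    by blast
  then show ?thesis
    using Z1[rule_format, of "k - 1"] Z2[rule_format, of "k - 1"] by auto
qed

text \<open>This is \<open>\<psi>\<^sub>k\<close> of the proof idea: for \<open>y = v\<^sub>i / w\<^sub>i\<close> one has
  \<open>min v\<^sub>i (t k * w\<^sub>i) = v\<^sub>i / \<phi> y * \<phi> (t k) * level_weight k y\<close>.\<close>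

definition level_weight :: "int \<Rightarrow> real \<Rightarrow> real" where
  "level_weight k y = min (\<phi> y) (t k * (\<phi> y / y)) / \<phi> (t k)"

lemma level_weight_nonneg: "0 < y \<Longrightarrow> 0 \<le> level_weight k y"
  using phi_pos[of y] phi_pos[OF t_pos[of k]] t_pos[of k]
  by (simp add: level_weight_def divide_nonneg_pos)

lemma phi_block_le:
  assumes "0 < y" "y \<le> t k"
  shows "block t y \<le> k" and "2 ^ nat (k - block t y) * \<phi> y \<le> \<phi> (t k)"
proof -
  let ?j = "block t y"
  have j: "t (?j - 1) < y" "y \<le> t ?j"
    using block_eq_iff[OF t_strongly_increasing assms(1)] by blast+
  show "?j \<le> k"
    using j assms strongly_increasing_mono[OF t_strongly_increasing, of k "?j - 1"] by linarith
  then have "2 ^ nat (k - ?j) * \<phi> y \<le> 2 ^ nat (k - ?j) * \<phi> (t ?j)"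
    using phi_mono[OF assms(1) j(2)] by simp
  also have "\<dots> \<le> \<phi> (t k)"
    using strongly_increasing_geometric[OF phi_t_strongly_increasing \<open>?j \<le> k\<close>] .
  finally show "2 ^ nat (k - ?j) * \<phi> y \<le> \<phi> (t k)" .
qed

lemma phi_div_block_le:
  assumes "0 < y" "t k < y"
  shows "k < block t y" and "2 ^ nat (block t y - 1 - k) * (\<phi> y / y) \<le> \<phi> (t k) / t k"
proof -
  let ?j = "block t y"
  have j: "t (?j - 1) < y" "y \<le> t ?j"
    using block_eq_iff[OF t_strongly_increasing assms(1)] by blast+
  show "k < ?j"
    using j assms strongly_increasing_mono[OF t_strongly_increasing, of ?j k] by linarith
  have "2 ^ nat (?j - 1 - k) * (\<phi> y / y) \<le> 2 ^ nat (?j - 1 - k) * (\<phi> (t (?j - 1)) / t (?j - 1))"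
    using phi_div_antimono[OF t_pos less_imp_le[OF j(1)]] by (rule mult_left_mono) simp
  also have "\<dots> \<le> \<phi> (t k) / t k"
    using strongly_decreasing_geometric[OF phi_t_div_strongly_decreasing] \<open>k < ?j\<close> by simp
  finally show "2 ^ nat (?j - 1 - k) * (\<phi> y / y) \<le> \<phi> (t k) / t k" .
qed

lemma level_weight_le_decay:
  assumes "0 < y"
  shows "level_weight k y \<le> 2 * (1 / 2 ^ nat \<bar>block t y - k\<bar>)"
proof -
  define n where "n = nat \<bar>block t y - k\<bar>"
  define m where "m = min (\<phi> y) (t k * (\<phi> y / y))"
  have pos: "0 < \<phi> (t k)" "0 < t k"
    using phi_pos t_pos by auto
  have "2 ^ n * m \<le> 2 * \<phi> (t k)"
  proof (cases "y \<le> t k")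
    case True
    then have "2 ^ n * m \<le> 2 ^ nat (k - block t y) * \<phi> y"
      using phi_block_le(1)[OF assms True] by (simp add: n_def m_def)
    also have "\<dots> \<le> \<phi> (t k)"
      using phi_block_le(2)[OF assms True] .
    finally show ?thesis
      using pos by linarith
  next
    case False
    then have "t k < y"
      by simp
    define X where "X = \<phi> y / y"
    have "n = Suc (nat (block t y - 1 - k))"
      using phi_div_block_le(1)[OF assms \<open>t k < y\<close>] by (simp add: n_def)
    then have "2 ^ n * m \<le> 2 * t k * (2 ^ nat (block t y - 1 - k) * X)"
      using pos by (simp add: m_def X_def[symmetric] mult_ac)
    also have "\<dots> \<le> 2 * t k * (\<phi> (t k) / t k)"
      using phi_div_block_le(2)[OF assms \<open>t k < y\<close>, folded X_def] pos
      by (intro mult_left_mono) simp_all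
    finally show ?thesis
      using pos by simp
  qed
  then have "m \<le> 2 * (1 / 2 ^ n) * \<phi> (t k)"
    by (simp add: le_divide_eq mult.commute)
  then show ?thesis
    using pos by (simp add: level_weight_def m_def n_def pos_divide_le_eq)
qed

lemma level_weight_cover:
  assumes "0 < y" "block t y = k"
  shows "1 \<le> 2 * level_weight k y \<or> 1 \<le> 2 * level_weight (k - 1) y"
proof -
  have y: "t (k - 1) < y" "y \<le> t k"
    using block_eq_iff[OF t_strongly_increasing assms(1)] assms(2) by blast+
  have pos: "0 < \<phi> y" "0 < t k" "0 < \<phi> (t k)" "0 < t (k - 1)" "0 < \<phi> (t (k - 1))"
    using assms phi_pos t_pos by auto
  from phi_t_step_cases[of k] show ?thesis
  proof
    assume step: "\<phi> (t k) \<le> 2 * \<phi> (t (k - 1))"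
    have "\<phi> y \<le> t k * (\<phi> y / y)"
      using mult_right_mono[OF y(2), of "\<phi> y / y"] pos assms(1) by simp
    then have "level_weight k y = \<phi> y / \<phi> (t k)"
      by (simp add: level_weight_def min_absorb1)
    moreover have "\<phi> (t k) \<le> 2 * \<phi> y"
      using step phi_mono[OF pos(4) less_imp_le[OF y(1)]] by linarith
    ultimately have "1 \<le> 2 * level_weight k y"
      using pos by (simp add: le_divide_eq)
    then show ?thesis ..
  next
    assume step: "\<phi> (t (k - 1)) / t (k - 1) \<le> 2 * (\<phi> (t k) / t k)"
    have "t (k - 1) * (\<phi> y / y) \<le> \<phi> y"
      using mult_right_mono[OF less_imp_le[OF y(1)], of "\<phi> y / y"] pos assms(1) by simp
    then have "level_weight (k - 1) y = t (k - 1) * (\<phi> y / y) / \<phi> (t (k - 1))"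
      by (simp add: level_weight_def min_absorb2)
    moreover have "\<phi> (t (k - 1)) / t (k - 1) \<le> 2 * (\<phi> y / y)"
      using step phi_div_antimono[OF assms(1) y(2)] by linarith
    then have "\<phi> (t (k - 1)) \<le> 2 * (t (k - 1) * (\<phi> y / y))"
      using pos by (simp add: divide_le_eq mult_ac)
    ultimately have "1 \<le> 2 * level_weight (k - 1) y"
      using pos assms(1) by (simp add: le_divide_eq mult_ac)
    then show ?thesis ..
  qed
qed

lemma lnorm_level_weights_le_blocks:
  fixes h :: "'i::countable \<Rightarrow> ennreal" and s :: "'i \<Rightarrow> real"
  assumes "1 \<le> p" "1 \<le> q" "\<And>i. 0 < s i"
  shows "lnorm p (\<lambda>k. lnorm q (\<lambda>i. ennreal (level_weight k (s i)) * h i))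
    \<le> 128 * lnorm p (\<lambda>j. lnorm q (\<lambda>i. if block t (s i) = j then h i else 0))"
proof -
  define B where "B j = lnorm q (\<lambda>i. if block t (s i) = j then h i else 0)" for j
  have level_le: "lnorm q (\<lambda>i. ennreal (level_weight k (s i)) * h i)
      \<le> 16 * (SUP j. decay (j - k) * B j)" for k
  proof -
    have "ennreal (level_weight k (s i)) \<le> 2 * (decay (block t (s i) - k))\<^sup>2" for i
    proof -
      have "ennreal (level_weight k (s i)) \<le> ennreal (2 * (1 / 2 ^ nat \<bar>block t (s i) - k\<bar>))"
        using level_weight_le_decay[OF assms(3)] by (rule ennreal_leI)
      also have "\<dots> = 2 * ennreal (1 / 2 ^ nat \<bar>block t (s i) - k\<bar>)"
        using ennreal_mult[of 2 "1 / 2 ^ nat \<bar>block t (s i) - k\<bar>"] by simp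
      also have "\<dots> \<le> 2 * (decay (block t (s i) - k))\<^sup>2"
        using inverse_two_power_le_decay_sq by (rule mult_left_mono) simp
      finally show ?thesis .
    qed
    then have "lnorm q (\<lambda>i. ennreal (level_weight k (s i)) * h i)
        \<le> lnorm q (\<lambda>i. 2 * ((decay (block t (s i) - k))\<^sup>2 * h i))"
      by (intro lnorm_mono) (simp add: mult.assoc[symmetric] mult_right_mono)
    also have "\<dots> = 2 * lnorm q (\<lambda>i. (decay (block t (s i) - k))\<^sup>2 * h i)"
      using assms(2) by (rule lnorm_cmult)
    also have "\<dots> \<le> 2 * (8 * (SUP j. decay (j - k) * B j))"
      unfolding B_def using assms(2) decay_le_1 infsum_decay_le
      by (intro mult_left_mono lnorm_weighted_blocks_le_SUP) auto
    finally show ?thesis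
      by (simp add: mult.assoc[symmetric])
  qed
  have "lnorm p (\<lambda>k. lnorm q (\<lambda>i. ennreal (level_weight k (s i)) * h i))
      \<le> lnorm p (\<lambda>k. 16 * (SUP j. decay (j - k) * B j))"
    using level_le by (rule lnorm_mono)
  also have "\<dots> = 16 * lnorm p (\<lambda>k. SUP j. decay (j - k) * B j)"
    using assms(1) by (rule lnorm_cmult)
  also have "\<dots> \<le> 16 * (8 * lnorm p B)"
    using assms(1) decay_le_1 infsum_decay_le
    by (intro mult_left_mono lnorm_weighted_SUP_le) (auto simp: decay_minus[of "_ - _", simplified])
  finally show ?thesis
    by (simp add: B_def[abs_def] mult.assoc[symmetric])
qed

lemma block_indicator_le_level_weights:
  fixes h :: ennreal
  assumes "0 < y"
  shows "(if block t y = k then h else 0)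
    \<le> 2 * max (ennreal (level_weight k y) * h) (ennreal (level_weight (k - 1) y) * h)"
    (is "_ \<le> 2 * ?m")
proof (cases "block t y = k")
  case True
  from level_weight_cover[OF assms True] obtain c
    where c: "c = level_weight k y \<or> c = level_weight (k - 1) y" and "1 \<le> 2 * c"
    by blast
  then have "ennreal 1 * h \<le> ennreal (2 * c) * h"
    by (intro mult_right_mono ennreal_leI) simp_all
  also have "\<dots> = 2 * (ennreal c * h)"
    using \<open>1 \<le> 2 * c\<close> by (simp add: ennreal_mult mult.assoc)
  also have "\<dots> \<le> 2 * ?m"
    using c by (auto intro: mult_left_mono)
  finally show ?thesis
    using True by simp
qed simp

lemma lnorm_blocks_le_level_weights:
  fixes h :: "'i::countable \<Rightarrow> ennreal" and s :: "'i \<Rightarrow> real"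
  assumes "1 \<le> p" "1 \<le> q" "\<And>i. 0 < s i"
  shows "lnorm p (\<lambda>k. lnorm q (\<lambda>i. if block t (s i) = k then h i else 0))
    \<le> 8 * lnorm p (\<lambda>k. lnorm q (\<lambda>i. ennreal (level_weight k (s i)) * h i))"
proof -
  define D where "D k = lnorm q (\<lambda>i. ennreal (level_weight k (s i)) * h i)" for k
  have block_le: "lnorm q (\<lambda>i. if block t (s i) = k then h i else 0) \<le> 4 * max (D k) (D (k - 1))"
    for k
  proof -
    have "lnorm q (\<lambda>i. if block t (s i) = k then h i else 0)
        \<le> lnorm q (\<lambda>i. 2 * max (ennreal (level_weight k (s i)) * h i)
          (ennreal (level_weight (k - 1) (s i)) * h i))"
      using block_indicator_le_level_weights[OF assms(3)] by (rule lnorm_mono)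
    also have "\<dots> = 2 * lnorm q (\<lambda>i. max (ennreal (level_weight k (s i)) * h i)
          (ennreal (level_weight (k - 1) (s i)) * h i))"
      using assms(2) by (rule lnorm_cmult)
    also have "\<dots> \<le> 2 * (2 * max (D k) (D (k - 1)))"
      unfolding D_def using assms(2) by (intro mult_left_mono lnorm_max_le) simp_all
    finally show ?thesis
      by (simp add: mult.assoc[symmetric])
  qed
  have "lnorm p (\<lambda>k. lnorm q (\<lambda>i. if block t (s i) = k then h i else 0))
      \<le> lnorm p (\<lambda>k. 4 * max (D k) (D (k - 1)))"
    using block_le by (rule lnorm_mono)
  also have "\<dots> = 4 * lnorm p (\<lambda>k. max (D k) (D (k - 1)))"
    using assms(1) by (rule lnorm_cmult)
  also have "\<dots> \<le> 4 * (2 * max (lnorm p D) (lnorm p (\<lambda>k. D (k - 1))))"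
    using assms(1) by (intro mult_left_mono lnorm_max_le) simp_all
  also have "lnorm p (\<lambda>k. D (k - 1)) = lnorm p D"
    by (rule lnorm_reindex) (auto simp: bij_def inj_def surj_def intro!: exI[of _ "_ + 1"])
  finally show ?thesis
    by (simp add: D_def[abs_def] mult.assoc[symmetric])
qed

lemma level_weight_mult_eq:
  assumes "0 < v" "0 < w"
  shows "level_weight k (v / w) * (v / \<phi> (v / w)) = min v (t k * w) / \<phi> (t k)"
proof -
  define s where "s = v / w"
  have pos: "0 < s" "0 < \<phi> s" "0 < v / \<phi> s"
    using assms phi_pos by (auto simp: s_def)
  have eq1: "\<phi> s * (v / \<phi> s) = v" and eq2: "t k * (\<phi> s / s) * (v / \<phi> s) = t k * w"
    using pos assms by (simp_all add: s_def)
  have min_eq: "min (\<phi> s) (t k * (\<phi> s / s)) * (v / \<phi> s) = min v (t k * w)"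
    by (subst min_mult_distrib_right) (simp only: if_P[OF less_imp_le[OF pos(3)]] eq1 eq2)
  show ?thesis
    unfolding level_weight_def s_def[symmetric] times_divide_eq_left min_eq ..
qed

lemma lnorm_level_weights_eq:
  fixes v w x :: "int \<Rightarrow> real"
  assumes "1 \<le> q" "\<And>i. 0 < v i" "\<And>i. 0 < w i"
  shows "lnorm q (\<lambda>i. ennreal (level_weight k (v i / w i)) * ennreal \<bar>x i * (v i / \<phi> (v i / w i))\<bar>)
    = lnorm q (\<lambda>i. ennreal (\<bar>x i\<bar> * min (v i) (t k * w i))) / ennreal (\<phi> (t k))"
proof -
  have "ennreal (level_weight k (v i / w i)) * ennreal \<bar>x i * (v i / \<phi> (v i / w i))\<bar>
      = ennreal (inverse (\<phi> (t k))) * ennreal (\<bar>x i\<bar> * min (v i) (t k * w i))" for i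
  proof -
    have pos: "0 < v i / w i" "0 < v i / \<phi> (v i / w i)" "0 < \<phi> (t k)"
      using assms phi_pos t_pos by auto
    have abs_eq: "\<bar>x i * (v i / \<phi> (v i / w i))\<bar> = \<bar>x i\<bar> * (v i / \<phi> (v i / w i))"
      using assms(2)[of i] phi_pos[OF pos(1)] by (simp add: abs_mult)
    have "level_weight k (v i / w i) * \<bar>x i * (v i / \<phi> (v i / w i))\<bar>
        = \<bar>x i\<bar> * (level_weight k (v i / w i) * (v i / \<phi> (v i / w i)))"
      unfolding abs_eq by (rule mult.left_commute)
    also have "\<dots> = inverse (\<phi> (t k)) * (\<bar>x i\<bar> * min (v i) (t k * w i))"
      unfolding level_weight_mult_eq[OF assms(2,3)] by (simp add: divide_inverse mult_ac)
    finally show ?thesis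
      using pos level_weight_nonneg[OF pos(1)] assms(2,3)[of i] t_pos[of k]
      by (simp add: ennreal_mult[symmetric] del: ennreal_mult)
  qed
  then show ?thesis
    using assms(1) phi_pos[OF t_pos]
    by (simp add: lnorm_cmult divide_ennreal_def inverse_ennreal mult.commute)
qed

lemma interp_norm_le_level_weights:
  fixes v w x :: "int \<Rightarrow> real"
  assumes "1 \<le> p" "1 \<le> q" "\<And>i. 0 < v i" "\<And>i. 0 < w i"
  shows "interp_norm (lq_weighted_norm q v) (lq_weighted_norm q w) \<phi> t p x
    \<le> 2 * lnorm p (\<lambda>k. lnorm q (\<lambda>i. ennreal (level_weight k (v i / w i))
      * ennreal \<bar>x i * (v i / \<phi> (v i / w i))\<bar>))"
proof -
  have "Kfun (lq_weighted_norm q v) (lq_weighted_norm q w) (t k) x / ennreal (\<phi> (t k))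
      \<le> 2 * lnorm q (\<lambda>i. ennreal (level_weight k (v i / w i))
        * ennreal \<bar>x i * (v i / \<phi> (v i / w i))\<bar>)" for k
    unfolding lnorm_level_weights_eq[OF assms(2-4)] ennreal_times_divide
    using assms t_pos[of k] by (intro divide_right_mono_ennreal Kfun_le_lnorm_min_weight)
      (auto intro: less_imp_le)
  then show ?thesis
    unfolding interp_norm_def lnorm_cmult[OF assms(1), symmetric] by (rule lnorm_mono)
qed

lemma level_weights_le_interp_norm:
  fixes v w x :: "int \<Rightarrow> real"
  assumes "1 \<le> p" "1 \<le> q" "\<And>i. 0 < v i" "\<And>i. 0 < w i"
  shows "lnorm p (\<lambda>k. lnorm q (\<lambda>i. ennreal (level_weight k (v i / w i))
      * ennreal \<bar>x i * (v i / \<phi> (v i / w i))\<bar>))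
    \<le> 4 * interp_norm (lq_weighted_norm q v) (lq_weighted_norm q w) \<phi> t p x"
proof -
  have "lnorm q (\<lambda>i. ennreal (level_weight k (v i / w i)) * ennreal \<bar>x i * (v i / \<phi> (v i / w i))\<bar>)
      \<le> 4 * (Kfun (lq_weighted_norm q v) (lq_weighted_norm q w) (t k) x / ennreal (\<phi> (t k)))" for k
    unfolding lnorm_level_weights_eq[OF assms(2-4)] ennreal_times_divide
    using assms t_pos[of k] by (intro divide_right_mono_ennreal lnorm_min_weight_le_Kfun)
      (auto intro: less_imp_le)
  then show ?thesis
    unfolding interp_norm_def lnorm_cmult[OF assms(1), symmetric] by (rule lnorm_mono)
qed

lemma lp_lq_blocks_weighted_norm_eq:
  assumes "\<And>i. 0 < v i" "\<And>i. 0 < w i"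
  shows "lp_lq_blocks_weighted_norm p q (\<lambda>k. {i. t (k - 1) < v i / w i \<and> v i / w i \<le> t k}) u x
    = lnorm p (\<lambda>k. lnorm q (\<lambda>i. if block t (v i / w i) = k then ennreal \<bar>x i * u i\<bar> else 0))"
  using block_eq_iff[OF t_strongly_increasing] assms
  by (simp add: lp_lq_blocks_weighted_norm_def)

lemma interp_norm_le_lp_lq_blocks:
  fixes v w x :: "int \<Rightarrow> real"
  assumes "1 \<le> p" "1 \<le> q" "\<And>i. 0 < v i" "\<And>i. 0 < w i"
  shows "interp_norm (lq_weighted_norm q v) (lq_weighted_norm q w) \<phi> t p x
    \<le> 256 * lp_lq_blocks_weighted_norm p q (\<lambda>k. {i. t (k - 1) < v i / w i \<and> v i / w i \<le> t k})
      (\<lambda>i. v i / \<phi> (v i / w i)) x"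
proof -
  have "interp_norm (lq_weighted_norm q v) (lq_weighted_norm q w) \<phi> t p x
      \<le> 2 * lnorm p (\<lambda>k. lnorm q (\<lambda>i. ennreal (level_weight k (v i / w i))
        * ennreal \<bar>x i * (v i / \<phi> (v i / w i))\<bar>))"
    using assms by (rule interp_norm_le_level_weights)
  also have "\<dots> \<le> 2 * (128 * lp_lq_blocks_weighted_norm p q
      (\<lambda>k. {i. t (k - 1) < v i / w i \<and> v i / w i \<le> t k}) (\<lambda>i. v i / \<phi> (v i / w i)) x)"
    unfolding lp_lq_blocks_weighted_norm_eq[OF assms(3,4)] using assms
    by (intro mult_left_mono lnorm_level_weights_le_blocks) simp_all
  finally show ?thesis
    by (simp add: mult.assoc[symmetric])
qed

lemma lp_lq_blocks_le_interp_norm: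
  fixes v w x :: "int \<Rightarrow> real"
  assumes "1 \<le> p" "1 \<le> q" "\<And>i. 0 < v i" "\<And>i. 0 < w i"
  shows "lp_lq_blocks_weighted_norm p q (\<lambda>k. {i. t (k - 1) < v i / w i \<and> v i / w i \<le> t k})
      (\<lambda>i. v i / \<phi> (v i / w i)) x
    \<le> 256 * interp_norm (lq_weighted_norm q v) (lq_weighted_norm q w) \<phi> t p x"
proof -
  have "lp_lq_blocks_weighted_norm p q (\<lambda>k. {i. t (k - 1) < v i / w i \<and> v i / w i \<le> t k})
      (\<lambda>i. v i / \<phi> (v i / w i)) x
      \<le> 8 * lnorm p (\<lambda>k. lnorm q (\<lambda>i. ennreal (level_weight k (v i / w i))
        * ennreal \<bar>x i * (v i / \<phi> (v i / w i))\<bar>))"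
    unfolding lp_lq_blocks_weighted_norm_eq[OF assms(3,4)] using assms
    by (intro lnorm_blocks_le_level_weights) simp_all
  also have "\<dots> \<le> 8 * (4 * interp_norm (lq_weighted_norm q v) (lq_weighted_norm q w) \<phi> t p x)"
    using level_weights_le_interp_norm[OF assms] by (rule mult_left_mono) simp
  also have "\<dots> \<le> 256 * interp_norm (lq_weighted_norm q v) (lq_weighted_norm q w) \<phi> t p x"
    by (simp add: mult.assoc[symmetric] mult_right_mono)
  finally show ?thesis .
qed

end

theorem lemma3p3:
  fixes p q :: ennreal and v w :: "int \<Rightarrow> real" and \<phi> :: "real \<Rightarrow> real" and t :: "int \<Rightarrow> real"
  assumes "1 \<le> p" and "1 \<le> q"
    and "\<forall>i. v i > 0" and "\<forall>i. w i > 0"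
    and "nondeg_quasi_concave \<phi>"
    and "discretizing_sequence \<phi> t"
  shows "equiv_spaces
           (interp_norm (lq_weighted_norm q v) (lq_weighted_norm q w) \<phi> t p)
           (lp_lq_blocks_weighted_norm p q (\<lambda>k. {i. t (k - 1) < v i / w i \<and> v i / w i \<le> t k})
              (\<lambda>i. v i / \<phi> (v i / w i)))"
proof -
  interpret discretized_quasi_concave \<phi> t
    using assms(5,6) by unfold_locales
  have "\<And>i. 0 < v i" "\<And>i. 0 < w i"
    using assms(3,4) by auto
  then show ?thesis
    unfolding equiv_spaces_def
    using interp_norm_le_lp_lq_blocks lp_lq_blocks_le_interp_norm assms(1,2)
    by (intro exI[of _ 256]) simp
qed

end
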